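(* Assume $Q:\Omega\to[0,\infty)$ is Lipschitz with $0<Q_{\min}\le Q\le Q_{\max}$, let $u\in C^{2,\alpha}(\Omega_+\cup\Gamma)$ be as in the standing setting with $(\partial_\nu u)^2=Q^2$ on $\Gamma$. For $\varepsilon>0$ let $U_\varepsilon$ be the intersection of $\Omega$ with the $\varepsilon$-tubular neighborhood of $\Gamma$, and define $$\mu_\varepsilon:=\inf\Big\{\int_{U_\varepsilon\cap\{u>0\}}|\nabla u_\psi|^2\,d\boldsymbol x:\ \psi\in C^1_c(\Gamma),\ \|\psi\|_{L^2(\Gamma)}=1\Big\},$$ where $u_\psi$ solves $\Delta u_\psi=0$ in $U_\varepsilon\cap\{u>0\}$, $u_\psi=Q\psi$ on $\Gamma$, $u_\psi=0$ on $\partial U_\varepsilon\cap\{u>0\}$, with $u_\psi(-1,y)=u_\psi(1,y)$ for all $y$ with $(\pm1,y)\in\overline{U_\varepsilon\cap\{u>0\}}$. Then $\lim_{\varepsilon\to0^+}\mu_\varepsilon=+\infty$.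
   Context: Standing setting: $\Omega=(-1,1)\times(0,\infty)$; $u^*\in C^1([-1,1])$ periodic, $u^*>0$; $\mathcal A=\{v\in L^1_{loc}(\Omega):\nabla v\in L^2,\ v(x,0)=u^*(x),\ v(-1,y)=v(1,y)\}$. $u\in\mathcal A$ with $\Omega_+:=\{u>0\}\cap\Omega$ open, $\Gamma:=\partial\{u>0\}\cap\Omega=\{(x,w(x)):x\in(-1,1)\}$ for a periodic $w\in C^3(\mathbb R)$ with $w>0$ on $[-1,1]$, and $\Delta u=0$ in $\Omega_+$, $u=0$ on $\Gamma$, $u=u^*$ on $\{y=0\}\cap\partial\Omega_+$, $u(-1,y)=u(1,y)$. $\nu=(-w',1)/\sqrt{1+w'^2}$ on $\Gamma$. *)

theory Defs
  imports "HOL-Analysis.Analysis"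
begin

type_synonym pt = "real \<times> real"

definition Omega :: "pt set" where
  "Omega = {p. -1 < fst p \<and> fst p < 1 \<and> 0 < snd p}"

definition px :: "(pt \<Rightarrow> real) \<Rightarrow> pt \<Rightarrow> real" where
  "px f p = deriv (\<lambda>t. f (t, snd p)) (fst p)"
definition py :: "(pt \<Rightarrow> real) \<Rightarrow> pt \<Rightarrow> real" where
  "py f p = deriv (\<lambda>t. f (fst p, t)) (snd p)"

definition laplacian :: "(pt \<Rightarrow> real) \<Rightarrow> pt \<Rightarrow> real" where
  "laplacian f p = px (px f) p + py (py f) p"

definition grad_sq :: "(pt \<Rightarrow> real) \<Rightarrow> pt \<Rightarrow> real" where
  "grad_sq f p = (px f p)\<^sup>2 + (py f p)\<^sup>2"

definition C2_on :: "pt set \<Rightarrow> (pt \<Rightarrow> real) \<Rightarrow> bool" where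
  "C2_on S f \<longleftrightarrow> open S \<and> f differentiable_on S \<and> px f differentiable_on S \<and> py f differentiable_on S
     \<and> continuous_on S (px (px f)) \<and> continuous_on S (px (py f))
     \<and> continuous_on S (py (px f)) \<and> continuous_on S (py (py f))"

definition harmonic_on :: "pt set \<Rightarrow> (pt \<Rightarrow> real) \<Rightarrow> bool" where
  "harmonic_on S f \<longleftrightarrow> C2_on S f \<and> (\<forall>p\<in>S. laplacian f p = 0)"

definition hoelder_on :: "real \<Rightarrow> pt set \<Rightarrow> (pt \<Rightarrow> real) \<Rightarrow> bool" where
  "hoelder_on \<alpha> S f \<longleftrightarrow> (\<exists>C. \<forall>p\<in>S. \<forall>q\<in>S. \<bar>f p - f q\<bar> \<le> C * dist p q powr \<alpha>)"

text \<open>u in C^{2,alpha}(Op \<union> G): C^2 in the open set Op, and u together with its first and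
  second partials is alpha-Hoelder on K \<inter> Op for every compact K \<subseteq> Op \<union> G
  (so all of them extend continuously up to G).\<close>
definition C2alpha_upto :: "real \<Rightarrow> pt set \<Rightarrow> pt set \<Rightarrow> (pt \<Rightarrow> real) \<Rightarrow> bool" where
  "C2alpha_upto \<alpha> Op G u \<longleftrightarrow> C2_on Op u \<and>
     (\<forall>K. compact K \<and> K \<subseteq> Op \<union> G \<longrightarrow>
        (\<forall>f\<in>{u, px u, py u, px (px u), px (py u), py (px u), py (py u)}. hoelder_on \<alpha> (K \<inter> Op) f))"

definition test_fun :: "pt set \<Rightarrow> (pt \<Rightarrow> real) \<Rightarrow> bool" where
  "test_fun S \<phi> \<longleftrightarrow> (\<forall>p. \<phi> differentiable (at p)) \<and> continuous_on UNIV (px \<phi>)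
     \<and> continuous_on UNIV (py \<phi>) \<and> compact (closure {p. \<phi> p \<noteq> 0})
     \<and> closure {p. \<phi> p \<noteq> 0} \<subseteq> S"

text \<open>The admissible class A (traces read pointwise).\<close>
definition admissible :: "(real \<Rightarrow> real) \<Rightarrow> (pt \<Rightarrow> real) \<Rightarrow> bool" where
  "admissible ustar v \<longleftrightarrow>
     v \<in> borel_measurable lebesgue \<and>
     (\<forall>K. compact K \<and> K \<subseteq> Omega \<longrightarrow> set_integrable lebesgue K v) \<and>
     (\<exists>g1 g2. set_integrable lebesgue Omega (\<lambda>p. (g1 p)\<^sup>2) \<and>
              set_integrable lebesgue Omega (\<lambda>p. (g2 p)\<^sup>2) \<and>
              g1 \<in> borel_measurable lebesgue \<and> g2 \<in> borel_measurable lebesgue \<and>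
              (\<forall>\<phi>. test_fun Omega \<phi> \<longrightarrow>
                 (LINT p:Omega|lebesgue. v p * px \<phi> p) = - (LINT p:Omega|lebesgue. g1 p * \<phi> p) \<and>
                 (LINT p:Omega|lebesgue. v p * py \<phi> p) = - (LINT p:Omega|lebesgue. g2 p * \<phi> p))) \<and>
     (\<forall>x. -1 \<le> x \<and> x \<le> 1 \<longrightarrow> v (x, 0) = ustar x) \<and>
     (\<forall>y>0. v (-1, y) = v (1, y))"

definition C3_real :: "(real \<Rightarrow> real) \<Rightarrow> bool" where
  "C3_real f \<longleftrightarrow> (\<forall>k<3. \<forall>x. ((deriv ^^ k) f) differentiable (at x))
     \<and> continuous_on UNIV ((deriv ^^ 3) f)"

definition Gam :: "(real \<Rightarrow> real) \<Rightarrow> pt set" where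
  "Gam w = {(x, w x) | x. -1 < x \<and> x < 1}"

definition dnu :: "(real \<Rightarrow> real) \<Rightarrow> (pt \<Rightarrow> real) \<Rightarrow> real \<Rightarrow> real" where
  "dnu w u x = Lim (at (x, w x) within {p\<in>Omega. u p > 0})
      (\<lambda>q. (px u q * (- deriv w x) + py u q) / sqrt (1 + (deriv w x)\<^sup>2))"

definition Ueps :: "(real \<Rightarrow> real) \<Rightarrow> real \<Rightarrow> pt set" where
  "Ueps w \<epsilon> = Omega \<inter> {p. infdist p (Gam w) < \<epsilon>}"

text \<open>psi in C^1_c(Gamma), through the parametrisation x \<mapsto> (x, w x).\<close>
definition C1c_Gam :: "(real \<Rightarrow> real) \<Rightarrow> (pt \<Rightarrow> real) \<Rightarrow> bool" where
  "C1c_Gam w \<psi> \<longleftrightarrow> (\<lambda>x. \<psi> (x, w x)) C1_differentiable_on {-1<..<1}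
     \<and> closure {x\<in>{-1<..<1}. \<psi> (x, w x) \<noteq> 0} \<subseteq> {-1<..<1}"

text \<open>Squared L^2(Gamma) norm w.r.t. arc length.\<close>
definition L2sq_Gam :: "(real \<Rightarrow> real) \<Rightarrow> (pt \<Rightarrow> real) \<Rightarrow> real" where
  "L2sq_Gam w \<psi> = (LBINT x=-1..1. (\<psi> (x, w x))\<^sup>2 * sqrt (1 + (deriv w x)\<^sup>2))"

definition solves_aux :: "(real \<Rightarrow> real) \<Rightarrow> (pt \<Rightarrow> real) \<Rightarrow> (pt \<Rightarrow> real) \<Rightarrow> real
     \<Rightarrow> (pt \<Rightarrow> real) \<Rightarrow> (pt \<Rightarrow> real) \<Rightarrow> bool" where
  "solves_aux w u Q \<epsilon> \<psi> v \<longleftrightarrow>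
     (let D = Ueps w \<epsilon> \<inter> {p\<in>Omega. u p > 0} in
       harmonic_on D v \<and> continuous_on (closure D) v \<and>
       (\<forall>p\<in>Gam w. v p = Q p * \<psi> p) \<and>
       (\<forall>p\<in>frontier (Ueps w \<epsilon>). u p > 0 \<and> -1 < fst p \<and> fst p < 1 \<longrightarrow> v p = 0) \<and>
       (\<forall>y. (-1, y) \<in> closure D \<or> (1, y) \<in> closure D \<longrightarrow> v (-1, y) = v (1, y)))"

definition mu_eps :: "(real \<Rightarrow> real) \<Rightarrow> (pt \<Rightarrow> real) \<Rightarrow> (pt \<Rightarrow> real) \<Rightarrow> real \<Rightarrow> ennreal" where
  "mu_eps w u Q \<epsilon> =
     (INF \<psi>v \<in> {(\<psi>, v). C1c_Gam w \<psi> \<and> L2sq_Gam w \<psi> = 1 \<and> solves_aux w u Q \<epsilon> \<psi> v}.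
        set_nn_integral lebesgue (Ueps w \<epsilon> \<inter> {p\<in>Omega. u p > 0})
          (\<lambda>p. ennreal (grad_sq (snd \<psi>v) p)))"

end

theory Submission
  imports Defs
begin

text \<open>
  Fix the side of \<open>\<Gamma>\<close> on which \<open>u > 0\<close>; by connectedness it is the same side for every \<open>x\<close>.
  Along the vertical segment that leaves \<open>(x, w x)\<close> into \<open>{u > 0}\<close>, the function \<open>u\<^sub>\<psi>\<close> drops
  from \<open>Q \<psi>\<close> to \<open>0\<close> before the segment leaves the \<open>\<epsilon>\<close>-tube, which happens after a length
  \<open>t \<le> C \<epsilon>\<close> because \<open>\<Gamma>\<close> is a Lipschitz graph. The one-dimensional inequality
  \<open>(f b - f a)\<^sup>2 / (b - a) \<le> \<integral>\<^sub>a\<^sup>b f'\<^sup>2\<close> bounds the energy on that segment below by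
  \<open>(Q \<psi>)\<^sup>2 / (C \<epsilon>)\<close>, and integrating over \<open>x\<close> (Fubini) with \<open>Q \<ge> Q\<^sub>m\<^sub>i\<^sub>n\<close> and
  \<open>\<parallel>\<psi>\<parallel>\<^sub>L\<^sub>2 = 1\<close> gives \<open>\<mu>\<^sub>\<epsilon> \<ge> c / \<epsilon>\<close>. Only the lower bound on \<open>Q\<close> and the geometry of
  \<open>\<Gamma>\<close> enter.
\<close>

lemma sq_increment_div_le_integral_sq_deriv:
  fixes f g :: "real \<Rightarrow> real"
  assumes ab: "a < b"
    and f': "\<And>y. y \<in> {a..b} \<Longrightarrow> (f has_real_derivative g y) (at y)"
    and g: "continuous_on {a..b} g"
  shows "(f b - f a)\<^sup>2 / (b - a) \<le> integral {a..b} (\<lambda>y. (g y)\<^sup>2)"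
proof -
  define l where "l = (f b - f a) / (b - a)"
  have ftc: "(g has_integral f b - f a) {a..b}"
    using ab f' by (intro fundamental_theorem_of_calculus)
      (auto simp: has_real_derivative_iff_has_vector_derivative[symmetric] has_field_derivative_at_within)
  have lin: "((\<lambda>y. 2 * l * g y - l\<^sup>2) has_integral (2 * l * (f b - f a) - l\<^sup>2 * (b - a))) {a..b}"
    using has_integral_mult_right[OF ftc, of "2 * l"] has_integral_const_real[of "l\<^sup>2" a b] ab
    by (intro has_integral_diff) (auto simp: mult.commute)
  have sq: "((\<lambda>y. (g y)\<^sup>2) has_integral integral {a..b} (\<lambda>y. (g y)\<^sup>2)) {a..b}"
    by (intro integrable_integral integrable_continuous_interval continuous_intros g)
  \<comment> \<open>\<open>2 l g - l\<^sup>2 \<le> g\<^sup>2\<close> with \<open>l\<close> the mean slope\<close>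
  have "2 * l * (f b - f a) - l\<^sup>2 * (b - a) \<le> integral {a..b} (\<lambda>y. (g y)\<^sup>2)"
    using has_integral_le[OF lin sq] sum_power2_ge_zero[of "g _ - l" 0]
    by (simp add: power2_eq_square algebra_simps)
  moreover have "2 * (D / d) * D - (D / d)\<^sup>2 * d = D\<^sup>2 / d" if "d \<noteq> 0" for D d :: real
    using that by (simp add: power2_eq_square field_simps)
  then have "2 * l * (f b - f a) - l\<^sup>2 * (b - a) = (f b - f a)\<^sup>2 / (b - a)"
    using ab unfolding l_def by (metis less_irrefl right_minus_eq)
  ultimately show ?thesis by simp
qed

lemma sq_increment_div_le_nn_integral_sq_deriv:
  fixes f g :: "real \<Rightarrow> real"
  assumes lh: "lo < hi" and f: "continuous_on {lo..hi} f"
    and f': "\<And>y. y \<in> {lo<..<hi} \<Longrightarrow> (f has_real_derivative g y) (at y)"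
    and g: "continuous_on {lo<..<hi} g"
  shows "ennreal ((f hi - f lo)\<^sup>2 / (hi - lo))
    \<le> (\<integral>\<^sup>+y. ennreal (indicator {lo<..<hi} y * (g y)\<^sup>2) \<partial>lborel)" (is "_ \<le> ?I")
proof (cases "?I = top")
  case False
  then obtain R where R: "?I = ennreal R" "0 \<le> R"
    using ennreal_cases[of ?I] by auto
  define F where "F a b = (f b - f a)\<^sup>2 / (hi - lo)" for a b
  have inner: "F a b \<le> R" if ab: "lo < a" "a < b" "b < hi" for a b
  proof -
    have sub: "{a..b} \<subseteq> {lo<..<hi}" using ab by auto
    have "F a b \<le> (f b - f a)\<^sup>2 / (b - a)"
      unfolding F_def using ab by (intro divide_left_mono) auto
    also have "\<dots> \<le> integral {a..b} (\<lambda>y. (g y)\<^sup>2)"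
      using ab f' sub by (intro sq_increment_div_le_integral_sq_deriv continuous_on_subset[OF g]) auto
    finally have "ennreal (F a b) \<le> ennreal (integral {a..b} (\<lambda>y. (g y)\<^sup>2))"
      by (rule ennreal_leI)
    also have "\<dots> = (\<integral>\<^sup>+y. ennreal (indicator {a..b} y * (g y)\<^sup>2) \<partial>lborel)"
    proof -
      have "((\<lambda>y. (g y)\<^sup>2) has_integral integral {a..b} (\<lambda>y. (g y)\<^sup>2)) {a..b}"
        by (intro integrable_integral integrable_continuous_interval continuous_intros
            continuous_on_subset[OF g sub])
      from nn_integral_has_integral_lebesgue[OF _ this] show ?thesis by simp
    qed
    also have "\<dots> \<le> ?I"
      using sub by (intro nn_integral_mono ennreal_leI) (auto simp: indicator_def)
    finally show ?thesis using R by simp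
  qed
  have f_lim: "(f \<longlongrightarrow> f y) (at y within S)" if "y \<in> {lo..hi}" "S \<subseteq> {lo..hi}" for y S
    using f that unfolding continuous_on_def by (meson tendsto_within_subset)
  \<comment> \<open>let the endpoints tend to \<open>lo\<close> and \<open>hi\<close> one after the other\<close>
  have left: "F lo b \<le> R" if b: "lo < b" "b < hi" for b
  proof (rule tendsto_le[of "at lo within {lo<..<b}"])
    show "((\<lambda>a. F a b) \<longlongrightarrow> F lo b) (at lo within {lo<..<b})"
      unfolding F_def using b lh by (intro tendsto_intros f_lim) auto
    show "\<forall>\<^sub>F a in at lo within {lo<..<b}. F a b \<le> R"
      using b by (auto simp: eventually_at_filter intro!: always_eventually inner)
  qed (use b in \<open>auto simp: at_within_eq_bot_iff\<close>)
  have "F lo hi \<le> R"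
  proof (rule tendsto_le[of "at hi within {lo<..<hi}"])
    show "((\<lambda>b. F lo b) \<longlongrightarrow> F lo hi) (at hi within {lo<..<hi})"
      unfolding F_def using lh by (intro tendsto_intros f_lim) auto
    show "\<forall>\<^sub>F b in at hi within {lo<..<hi}. F lo b \<le> R"
      by (auto simp: eventually_at_filter intro!: always_eventually left)
  qed (use lh in \<open>auto simp: at_within_eq_bot_iff\<close>)
  then show ?thesis using R unfolding F_def by (simp add: ennreal_leI)
qed simp

lemma C3_real_differentiable:
  assumes "C3_real w"
  shows "w differentiable (at x)" and "deriv w differentiable (at x)"
proof -
  have "\<forall>k<3. \<forall>x. ((deriv ^^ k) w) differentiable (at x)"
    using assms unfolding C3_real_def by blast
  from this[rule_format, of 0] this[rule_format, of 1]
  show "w differentiable (at x)" and "deriv w differentiable (at x)" by simp_all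
qed

lemma C3_real_continuous_on: "C3_real w \<Longrightarrow> continuous_on S w"
  by (simp add: C3_real_differentiable continuous_at_imp_continuous_on
      differentiable_imp_continuous_within)

lemma C3_real_bounded_deriv_lipschitz:
  assumes "C3_real w"
  obtains B where "B > 0" "\<forall>x\<in>{lo..hi}. \<bar>deriv w x\<bar> \<le> B" "B-lipschitz_on {lo..hi} w"
proof -
  have "continuous_on {lo..hi} (deriv w)"
    using C3_real_differentiable(2)[OF assms]
    by (simp add: continuous_at_imp_continuous_on differentiable_imp_continuous_within)
  then have "compact (deriv w ` {lo..hi::real})"
    by (rule compact_continuous_image) simp
  then obtain B where B: "B > 0" "\<forall>y\<in>deriv w ` {lo..hi}. norm y \<le> B"
    using compact_imp_bounded bounded_pos by metis
  have bound: "\<bar>deriv w x\<bar> \<le> B" if "x \<in> {lo..hi}" for x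
    using B that by auto
  have w': "DERIV w t :> deriv w t" for t
    using C3_real_differentiable(1)[OF assms] DERIV_deriv_iff_real_differentiable by blast
  have ordered: "\<bar>w b - w a\<bar> \<le> B * (b - a)" if "a < b" "a \<in> {lo..hi}" "b \<in> {lo..hi}" for a b
  proof -
    obtain z where z: "a < z" "z < b" "w b - w a = (b - a) * deriv w z"
      using MVT2[OF \<open>a < b\<close> w'] by blast
    have "\<bar>deriv w z\<bar> \<le> B" using bound z that by auto
    then show ?thesis using z(3) that(1) by (simp add: abs_mult mult.commute mult_right_mono)
  qed
  have "B-lipschitz_on {lo..hi} w"
  proof (rule lipschitz_onI)
    fix x y :: real assume "x \<in> {lo..hi}" "y \<in> {lo..hi}"
    then show "dist (w x) (w y) \<le> B * dist x y"
      using ordered[of x y] ordered[of y x]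
      by (cases "x < y"; cases "y < x") (auto simp: dist_real_def abs_minus_commute)
  qed (use B in simp)
  then show ?thesis using that B(1) bound by blast
qed

text \<open>Either the horizontal offset to a point of \<open>\<Gamma>\<close> is at least \<open>s / (2 (B + 1))\<close>, or over
  that offset the graph moves by at most \<open>s / 2\<close>.\<close>

lemma infdist_Gam_vertical_ge:
  assumes lip: "B-lipschitz_on {-1..1} w"
    and x: "x \<in> {-1..1}" and \<sigma>: "\<bar>\<sigma>\<bar> = 1" and s: "s \<ge> 0"
  shows "s / (2 * (B + 1)) \<le> infdist (x, w x + \<sigma> * s) (Gam w)"
proof -
  define C where "C = 2 * (B + 1)"
  have B: "B \<ge> 0" using lip by (rule lipschitz_on_nonneg)
  then have C: "C > 0" "C \<ge> 2" "B / C \<le> 1/2" by (auto simp: C_def field_simps)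
  have ne: "Gam w \<noteq> {}" unfolding Gam_def by (auto intro: exI[of _ 0])
  have "s / C \<le> dist (x, w x + \<sigma> * s) q" if q: "q \<in> Gam w" for q
  proof -
    obtain x' where x': "q = (x', w x')" "-1 < x'" "x' < 1" using q unfolding Gam_def by auto
    have horiz: "\<bar>x - x'\<bar> \<le> dist (x, w x + \<sigma> * s) q"
      and vert: "\<bar>w x + \<sigma> * s - w x'\<bar> \<le> dist (x, w x + \<sigma> * s) q"
      unfolding x'(1) dist_Pair_Pair dist_real_def by (rule real_le_rsqrt, simp)+
    show ?thesis
    proof (cases "\<bar>x - x'\<bar> \<ge> s / C")
      case True then show ?thesis using horiz by linarith
    next
      case False
      have "\<bar>w x - w x'\<bar> \<le> B * \<bar>x - x'\<bar>"
        using lipschitz_onD[OF lip, of x x'] x x' by (simp add: dist_real_def)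
      also have "\<dots> \<le> B * (s / C)" using False B by (intro mult_left_mono) auto
      also have "\<dots> = (B / C) * s" by simp
      also have "\<dots> \<le> (1/2) * s" using C(3) s by (intro mult_right_mono) auto
      finally have "\<bar>w x - w x'\<bar> \<le> s / 2" by simp
      moreover have "\<bar>\<sigma> * s\<bar> = s" using \<sigma> s by (simp add: abs_mult)
      ultimately have "s / 2 \<le> \<bar>w x + \<sigma> * s - w x'\<bar>" by linarith
      moreover have "s / C \<le> s / 2" using C s by (intro divide_left_mono) auto
      ultimately show ?thesis using vert by linarith
    qed
  qed
  then show ?thesis unfolding C_def[symmetric] infdist_notempty[OF ne]
    by (intro cINF_greatest ne) auto
qed

lemma first_exit_time:
  fixes F :: "real \<Rightarrow> real"
  assumes F: "continuous_on UNIV F" and F0: "F 0 < \<epsilon>" and grow: "\<And>s. s \<ge> 0 \<Longrightarrow> s / C \<le> F s"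
    and C: "C > 0" and \<epsilon>: "\<epsilon> > 0"
  obtains t where "0 < t" "t \<le> C * \<epsilon>" "\<epsilon> \<le> F t" "\<And>s. 0 \<le> s \<Longrightarrow> s < t \<Longrightarrow> F s < \<epsilon>"
proof -
  define T where "T = {0..C * \<epsilon>} \<inter> {s. \<epsilon> \<le> F s}"
  have closed: "closed T" unfolding T_def
    by (intro closed_Int closed_atLeastAtMost closed_Collect_le continuous_on_const F)
  have CT: "C * \<epsilon> \<in> T" unfolding T_def using grow[of "C * \<epsilon>"] C \<epsilon> by auto
  have bdd: "bdd_below T" unfolding T_def by (rule bdd_belowI[of _ 0]) auto
  have tT: "Inf T \<in> T" using closed_contains_Inf[OF _ bdd closed] CT by blast
  have before: "F s < \<epsilon>" if "0 \<le> s" "s < Inf T" for s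
  proof (rule ccontr)
    assume "\<not> F s < \<epsilon>"
    then have "s \<in> T" using that tT unfolding T_def by auto
    then show False using cInf_lower[OF _ bdd] that(2) by fastforce
  qed
  have "Inf T \<noteq> 0" using tT F0 unfolding T_def by auto
  with tT have "0 < Inf T" "Inf T \<le> C * \<epsilon>" "\<epsilon> \<le> F (Inf T)" unfolding T_def by auto
  then show ?thesis using before by (rule that)
qed

definition above_graph :: "(real \<Rightarrow> real) \<Rightarrow> pt set" where
  "above_graph w = {p. -1 < fst p \<and> fst p < 1 \<and> w (fst p) < snd p}"

definition below_graph :: "(real \<Rightarrow> real) \<Rightarrow> pt set" where
  "below_graph w = {p. -1 < fst p \<and> fst p < 1 \<and> 0 < snd p \<and> snd p < w (fst p)}"

lemma connected_above_graph:
  assumes "continuous_on UNIV w"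
  shows "connected (above_graph w)"
proof -
  have "above_graph w = (\<lambda>z. (fst z, w (fst z) + snd z)) ` ({-1<..<1} \<times> {0<..})"
  proof (intro equalityI subsetI)
    fix p assume "p \<in> above_graph w"
    then show "p \<in> (\<lambda>z. (fst z, w (fst z) + snd z)) ` ({-1<..<1} \<times> {0<..})"
      unfolding above_graph_def by (auto intro!: image_eqI[of _ _ "(fst p, snd p - w (fst p))"])
  qed (auto simp: above_graph_def)
  also have "connected \<dots>"
    by (intro connected_continuous_image convex_connected convex_Times continuous_intros
        continuous_on_compose2[OF assms]) (auto simp: convex_real_interval)
  finally show ?thesis .
qed

lemma connected_below_graph:
  assumes "continuous_on UNIV w" "\<forall>x\<in>{-1<..<1}. w x > 0"
  shows "connected (below_graph w)"
proof -
  have "below_graph w = (\<lambda>z. (fst z, snd z * w (fst z))) ` ({-1<..<1} \<times> {0<..<1})"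
  proof (intro equalityI subsetI)
    fix p assume p: "p \<in> below_graph w"
    then have "w (fst p) > 0" using assms(2) unfolding below_graph_def by auto
    with p show "p \<in> (\<lambda>z. (fst z, snd z * w (fst z))) ` ({-1<..<1} \<times> {0<..<1})"
      unfolding below_graph_def
      by (auto simp: field_simps intro!: image_eqI[of _ _ "(fst p, snd p / w (fst p))"])
  qed (use assms(2) in \<open>auto simp: below_graph_def\<close>)
  also have "connected \<dots>"
    by (intro connected_continuous_image convex_connected convex_Times continuous_intros
        continuous_on_compose2[OF assms(1)]) (auto simp: convex_real_interval)
  finally show ?thesis .
qed

text \<open>Each side of \<open>\<Gamma>\<close> in \<open>\<Omega>\<close> is connected and misses \<open>\<partial>P\<close>, so it lies in \<open>P\<close> or outside
  \<open>P\<close>; both cannot lie outside since \<open>\<partial>P \<supseteq> \<Gamma> \<noteq> {}\<close>. The sign \<open>\<sigma>\<close> records the side.\<close>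

lemma Gam_side:
  fixes P :: "pt set"
  assumes w: "continuous_on UNIV w" "\<forall>x\<in>{-1<..<1}. w x > 0"
    and P: "P \<subseteq> Omega" "P \<inter> Gam w = {}" and fr: "frontier P \<inter> Omega = Gam w"
  obtains \<sigma> :: real where "\<sigma> = 1 \<or> \<sigma> = -1"
    "\<forall>x\<in>{-1<..<1}. \<forall>s>0. (\<sigma> = -1 \<longrightarrow> s < w x) \<longrightarrow> (x, w x + \<sigma> * s) \<in> P"
proof -
  have off_Gam: "S \<inter> frontier P = {}" if "S \<subseteq> Omega" "S \<inter> Gam w = {}" for S
    using that fr by blast
  have sides: "above_graph w \<subseteq> Omega" "below_graph w \<subseteq> Omega"
    "above_graph w \<inter> Gam w = {}" "below_graph w \<inter> Gam w = {}"
    using w(2) by (force simp: above_graph_def below_graph_def Omega_def Gam_def)+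
  have above: "above_graph w \<inter> P = {} \<or> above_graph w \<subseteq> P"
    using connected_Int_frontier[OF connected_above_graph[OF w(1)], of P] off_Gam sides by blast
  have below: "below_graph w \<inter> P = {} \<or> below_graph w \<subseteq> P"
    using connected_Int_frontier[OF connected_below_graph[OF w], of P] off_Gam sides by blast
  have "P \<subseteq> above_graph w \<union> below_graph w"
  proof
    fix p assume "p \<in> P"
    moreover have "p \<notin> Gam w" using \<open>p \<in> P\<close> P(2) by blast
    ultimately show "p \<in> above_graph w \<union> below_graph w"
      using P(1) by (cases p) (auto simp: above_graph_def below_graph_def Omega_def Gam_def)
  qed
  moreover have "(0, w 0) \<in> Gam w" unfolding Gam_def by auto
  then have "P \<noteq> {}" using fr by auto
  ultimately consider "above_graph w \<subseteq> P" | "below_graph w \<subseteq> P"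
    using above below by blast
  then show ?thesis
  proof cases
    case 1
    then show ?thesis using that[of 1] by (auto simp: above_graph_def subset_iff)
  next
    case 2
    then show ?thesis using that[of "-1"] w(2) by (auto simp: below_graph_def subset_iff)
  qed
qed

lemma open_Omega: "open Omega"
  unfolding Omega_def by (intro open_Collect_conj open_Collect_less continuous_intros)

lemma open_Ueps: "open (Ueps w \<epsilon>)"
  unfolding Ueps_def by (intro open_Int open_Omega open_Collect_less continuous_intros)

lemma vertical_segment_closure:
  fixes D :: "pt set"
  assumes "lo < hi" "\<forall>y\<in>{lo<..<hi}. (x, y) \<in> D"
  shows "(\<lambda>y. (x, y)) ` {lo..hi} \<subseteq> closure D"
proof -
  have "(\<lambda>y. (x, y)) ` closure {lo<..<hi} \<subseteq> closure D"
    using assms(2) closure_subset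
    by (intro image_closure_subset) (force intro!: continuous_intros)+
  then show ?thesis by (simp add: closure_greaterThanLessThan[OF assms(1)])
qed

lemma vertical_energy_ge:
  fixes v :: "pt \<Rightarrow> real"
  assumes D: "open D"
    and v: "continuous_on (closure D) v" "v differentiable_on D" "continuous_on D (py v)"
    and seg: "lo < hi" "\<forall>y\<in>{lo<..<hi}. (x, y) \<in> D"
  shows "ennreal ((v (x, hi) - v (x, lo))\<^sup>2 / (hi - lo))
    \<le> (\<integral>\<^sup>+y. ennreal (indicator D (x, y) * (py v (x, y))\<^sup>2) \<partial>lborel)"
proof -
  have v_seg: "continuous_on {lo..hi} (\<lambda>y. v (x, y))"
    by (rule continuous_on_compose2[OF v(1) _ vertical_segment_closure[OF seg]])
      (auto intro!: continuous_intros)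
  have v': "((\<lambda>t. v (x, t)) has_real_derivative py v (x, y)) (at y)" if "y \<in> {lo<..<hi}" for y
  proof -
    have "v differentiable at (x, y)"
      using v(2) D seg(2) that differentiable_on_eq_differentiable_at by blast
    then have "(\<lambda>t. v (x, t)) differentiable at y"
      using differentiable_chain_at[of "\<lambda>t. (x, t)" y v]
      by (auto simp: o_def intro!: derivative_intros)
    then show ?thesis unfolding py_def
      using DERIV_deriv_iff_real_differentiable by fastforce
  qed
  have py_seg: "continuous_on {lo<..<hi} (\<lambda>y. py v (x, y))"
    by (rule continuous_on_compose2[OF v(3)]) (use seg(2) in \<open>auto intro!: continuous_intros\<close>)
  have "ennreal ((v (x, hi) - v (x, lo))\<^sup>2 / (hi - lo))
      \<le> (\<integral>\<^sup>+y. ennreal (indicator {lo<..<hi} y * (py v (x, y))\<^sup>2) \<partial>lborel)"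
    by (rule sq_increment_div_le_nn_integral_sq_deriv[OF seg(1) v_seg v' py_seg])
  also have "\<dots> \<le> (\<integral>\<^sup>+y. ennreal (indicator D (x, y) * (py v (x, y))\<^sup>2) \<partial>lborel)"
    using seg(2) by (intro nn_integral_mono ennreal_leI) (auto simp: indicator_def)
  finally show ?thesis .
qed

text \<open>The vertical segment from \<open>(x, w x)\<close> into \<open>{u > 0}\<close> stays in the tube up to its first
  exit time \<open>t \<le> C \<epsilon>\<close>, where \<open>u\<^sub>\<psi>\<close> vanishes; at its start \<open>u\<^sub>\<psi> = Q \<psi>\<close>. The assumption
  \<open>C \<epsilon> < w x\<close> keeps a downward segment inside \<open>\<Omega>\<close>.\<close>

lemma solves_aux_vertical_energy_ge:
  fixes w :: "real \<Rightarrow> real" and u Q \<psi> v :: "pt \<Rightarrow> real" and \<epsilon> :: real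
  defines "D \<equiv> Ueps w \<epsilon> \<inter> {p\<in>Omega. u p > 0}"
  assumes sol: "solves_aux w u Q \<epsilon> \<psi> v"
    and \<sigma>: "\<sigma> = 1 \<or> \<sigma> = -1"
    and side: "\<forall>s>0. (\<sigma> = -1 \<longrightarrow> s < w x) \<longrightarrow> (x, w x + \<sigma> * s) \<in> {p\<in>Omega. u p > 0}"
    and x: "x \<in> {-1<..<1}" and \<epsilon>: "\<epsilon> > 0" and C: "C > 0"
    and grow: "\<And>s. s \<ge> 0 \<Longrightarrow> s / C \<le> infdist (x, w x + \<sigma> * s) (Gam w)"
    and small: "C * \<epsilon> < w x"
  shows "ennreal ((Q (x, w x) * \<psi> (x, w x))\<^sup>2 / (C * \<epsilon>))
    \<le> (\<integral>\<^sup>+y. ennreal (indicator D (x, y) * (py v (x, y))\<^sup>2) \<partial>lborel)"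
proof -
  have harm: "harmonic_on D v" and v_cl: "continuous_on (closure D) v"
    and v_Gam: "\<forall>p\<in>Gam w. v p = Q p * \<psi> p"
    and v_fr: "\<forall>p\<in>frontier (Ueps w \<epsilon>). u p > 0 \<and> -1 < fst p \<and> fst p < 1 \<longrightarrow> v p = 0"
    using sol unfolding solves_aux_def D_def Let_def by auto
  have D: "open D" and v_diff: "v differentiable_on D" "py v differentiable_on D"
    using harm unfolding harmonic_on_def C2_on_def by auto
  have xG: "(x, w x) \<in> Gam w" using x unfolding Gam_def by auto
  define F where "F s = infdist (x, w x + \<sigma> * s) (Gam w)" for s
  have F: "continuous_on UNIV F" unfolding F_def by (intro continuous_intros)
  have F0: "F 0 < \<epsilon>" unfolding F_def using xG \<epsilon> by simp
  obtain t where t: "0 < t" "t \<le> C * \<epsilon>" "\<epsilon> \<le> F t"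
    and inside: "\<And>s. 0 \<le> s \<Longrightarrow> s < t \<Longrightarrow> F s < \<epsilon>"
    using first_exit_time[of F \<epsilon> C, OF F F0 grow[folded F_def] C \<epsilon>] by blast
  have pos: "(x, w x + \<sigma> * s) \<in> {p\<in>Omega. u p > 0}" if "0 < s" "s \<le> t" for s
    using side that t small by auto
  define lo where "lo = min (w x) (w x + \<sigma> * t)"
  define hi where "hi = max (w x) (w x + \<sigma> * t)"
  have hl: "hi - lo = t" using \<sigma> t(1) unfolding lo_def hi_def by auto
  have seg: "\<forall>y\<in>{lo<..<hi}. (x, y) \<in> D"
  proof
    fix y assume y: "y \<in> {lo<..<hi}"
    have "0 < \<sigma> * (y - w x) \<and> \<sigma> * (y - w x) < t \<and> y = w x + \<sigma> * (\<sigma> * (y - w x))"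
      using \<sigma> y t(1) unfolding lo_def hi_def by (auto simp: min_def max_def split: if_splits)
    then obtain s where s: "0 < s" "s < t" "y = w x + \<sigma> * s" by blast
    then have "(x, y) \<in> {p\<in>Omega. u p > 0}" "infdist (x, y) (Gam w) < \<epsilon>"
      using pos[of s] inside[of s] unfolding F_def by auto
    then show "(x, y) \<in> D" unfolding D_def Ueps_def by auto
  qed
  have energy: "ennreal ((v (x, hi) - v (x, lo))\<^sup>2 / t)
      \<le> (\<integral>\<^sup>+y. ennreal (indicator D (x, y) * (py v (x, y))\<^sup>2) \<partial>lborel)"
    using vertical_energy_ge[OF D v_cl v_diff(1) differentiable_imp_continuous_on[OF v_diff(2)]
        _ seg] hl t(1) by simp
  define p_exit where "p_exit = (x, w x + \<sigma> * t)"
  have "w x + \<sigma> * t \<in> {lo..hi}" unfolding lo_def hi_def by auto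
  then have "p_exit \<in> closure D"
    using vertical_segment_closure[of lo hi x D] seg hl t(1) unfolding p_exit_def by auto
  then have "p_exit \<in> closure (Ueps w \<epsilon>)"
    using closure_mono[of D "Ueps w \<epsilon>"] unfolding D_def by auto
  moreover have "p_exit \<notin> Ueps w \<epsilon>" using t(3) unfolding p_exit_def Ueps_def F_def by auto
  ultimately have "p_exit \<in> frontier (Ueps w \<epsilon>)"
    unfolding frontier_def using interior_open[OF open_Ueps] by auto
  then have "v p_exit = 0" using v_fr pos[of t] t(1) x unfolding p_exit_def by auto
  moreover have "v (x, lo) = v (x, w x) \<and> v (x, hi) = v p_exit
      \<or> v (x, lo) = v p_exit \<and> v (x, hi) = v (x, w x)"
    unfolding p_exit_def lo_def hi_def by (auto simp: min_def max_def)
  ultimately have "(v (x, hi) - v (x, lo))\<^sup>2 = (Q (x, w x) * \<psi> (x, w x))\<^sup>2"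
    using v_Gam xG by (auto simp: power2_eq_square)
  moreover have "(Q (x, w x) * \<psi> (x, w x))\<^sup>2 / (C * \<epsilon>) \<le> (Q (x, w x) * \<psi> (x, w x))\<^sup>2 / t"
    using t by (intro divide_left_mono) auto
  ultimately have "ennreal ((Q (x, w x) * \<psi> (x, w x))\<^sup>2 / (C * \<epsilon>))
      \<le> ennreal ((v (x, hi) - v (x, lo))\<^sup>2 / t)"
    by (intro ennreal_leI) simp
  then show ?thesis using energy by (rule order_trans)
qed

lemma L2sq_Gam_eq_1_nn_integral:
  assumes "L2sq_Gam w \<psi> = 1"
  shows "(\<lambda>x. ennreal (indicator {-1<..<1} x * ((\<psi> (x, w x))\<^sup>2 * sqrt (1 + (deriv w x)\<^sup>2))))
      \<in> borel_measurable lborel"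
    and "(\<integral>\<^sup>+x. ennreal (indicator {-1<..<1} x * ((\<psi> (x, w x))\<^sup>2 * sqrt (1 + (deriv w x)\<^sup>2)))
      \<partial>lborel) = 1"
proof -
  define g where "g x = indicator {-1<..<1::real} x * ((\<psi> (x, w x))\<^sup>2 * sqrt (1 + (deriv w x)\<^sup>2))"
    for x
  have "einterval (-1) 1 = {-1<..<1::real}"
    using einterval_eq_Icc[of "-1" 1] by (simp add: one_ereal_def)
  moreover have "(-1::ereal) \<le> 1" by (simp add: one_ereal_def)
  ultimately have g1: "integral\<^sup>L lborel g = 1"
    using assms unfolding L2sq_Gam_def interval_lebesgue_integral_def set_lebesgue_integral_def g_def
    by simp
  then have g: "integrable lborel g" using not_integrable_integral_eq by fastforce
  then show "(\<lambda>x. ennreal (g x)) \<in> borel_measurable lborel" by simp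
  have "AE x in lborel. 0 \<le> g x" unfolding g_def by (auto simp: indicator_def)
  then show "(\<integral>\<^sup>+x. ennreal (g x) \<partial>lborel) = 1"
    using nn_integral_eq_integral[OF g] g1 by simp
qed

lemma nn_integral_vertical_slices_le_energy:
  fixes v :: "pt \<Rightarrow> real"
  assumes D: "open D" and py: "continuous_on D (py v)"
  shows "(\<integral>\<^sup>+x. \<integral>\<^sup>+y. ennreal (indicator D (x, y) * (py v (x, y))\<^sup>2) \<partial>lborel \<partial>lborel)
    \<le> set_nn_integral lebesgue D (\<lambda>p. ennreal (grad_sq v p))"
proof -
  define h where "h p = ennreal (indicator D p * (py v p)\<^sup>2)" for p :: pt
  have "(\<lambda>p. indicator D p *\<^sub>R (py v p)\<^sup>2) \<in> borel_measurable borel"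
    using D py by (intro borel_measurable_continuous_on_indicator) (auto intro!: continuous_intros)
  then have "h \<in> borel_measurable (lborel \<Otimes>\<^sub>M lborel)"
    unfolding h_def lborel_prod by simp
  then have "(\<integral>\<^sup>+x. \<integral>\<^sup>+y. h (x, y) \<partial>lborel \<partial>lborel) = integral\<^sup>N lborel h"
    by (simp add: lborel.nn_integral_fst lborel_prod)
  also have "\<dots> \<le> (\<integral>\<^sup>+p. ennreal (grad_sq v p) * indicator D p \<partial>lborel)"
    unfolding h_def grad_sq_def
    by (intro nn_integral_mono) (auto simp: indicator_def intro!: ennreal_leI)
  also have "\<dots> = set_nn_integral lebesgue D (\<lambda>p. ennreal (grad_sq v p))"
    by (simp add: nn_integral_completion)
  finally show ?thesis unfolding h_def .
qed

lemma mu_eps_ge_inverse: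
  fixes w :: "real \<Rightarrow> real" and u Q :: "pt \<Rightarrow> real" and B :: real
  defines "C \<equiv> 2 * (B + 1)"
  assumes \<sigma>: "\<sigma> = 1 \<or> \<sigma> = -1"
    and side: "\<forall>x\<in>{-1<..<1}. \<forall>s>0. (\<sigma> = -1 \<longrightarrow> s < w x) \<longrightarrow> (x, w x + \<sigma> * s) \<in> {p\<in>Omega. u p > 0}"
    and w': "\<forall>x\<in>{-1..1}. \<bar>deriv w x\<bar> \<le> B" and lip: "B-lipschitz_on {-1..1} w"
    and m: "\<forall>x\<in>{-1..1}. m \<le> w x"
    and Q: "0 \<le> Qmin" "\<forall>x\<in>{-1<..<1}. Qmin \<le> Q (x, w x)"
    and \<epsilon>: "0 < \<epsilon>" "C * \<epsilon> < m"
  shows "ennreal (Qmin\<^sup>2 / (C * sqrt (1 + B\<^sup>2) * \<epsilon>)) \<le> mu_eps w u Q \<epsilon>"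
  unfolding mu_eps_def
proof (rule INF_greatest, clarify)
  fix \<psi> v assume \<psi>: "C1c_Gam w \<psi>" "L2sq_Gam w \<psi> = 1" and sol: "solves_aux w u Q \<epsilon> \<psi> v"
  define D where "D = Ueps w \<epsilon> \<inter> {p\<in>Omega. u p > 0}"
  define K where "K = sqrt (1 + B\<^sup>2)"
  define c where "c = Qmin\<^sup>2 / (C * K * \<epsilon>)"
  define g where "g x = indicator {-1<..<1::real} x * ((\<psi> (x, w x))\<^sup>2 * sqrt (1 + (deriv w x)\<^sup>2))"
    for x
  have B: "B \<ge> 0" using lip by (rule lipschitz_on_nonneg)
  have C: "C > 0" and K: "K > 0" unfolding C_def K_def using B by (auto intro: add_pos_nonneg)
  have D: "open D" and py: "continuous_on D (py v)"
    using sol unfolding solves_aux_def harmonic_on_def C2_on_def D_def Let_def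
    by (auto intro: differentiable_imp_continuous_on)
  have slice: "ennreal c * ennreal (g x) \<le> (\<integral>\<^sup>+y. ennreal (indicator D (x, y) * (py v (x, y))\<^sup>2) \<partial>lborel)"
    for x
  proof (cases "x \<in> {-1<..<1}")
    case x: True
    then have x': "x \<in> {-1..1}" by auto
    have "\<bar>deriv w x\<bar> \<le> \<bar>B\<bar>" using w' x' B by auto
    then have "(deriv w x)\<^sup>2 \<le> B\<^sup>2" by (simp add: abs_le_square_iff)
    then have "sqrt (1 + (deriv w x)\<^sup>2) \<le> K" unfolding K_def by simp
    then have "sqrt (1 + (deriv w x)\<^sup>2) / K \<le> 1" using K by simp
    have "c * g x = Qmin\<^sup>2 * (\<psi> (x, w x))\<^sup>2 * (sqrt (1 + (deriv w x)\<^sup>2) / K) / (C * \<epsilon>)"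
      using x unfolding c_def g_def by (simp add: ac_simps)
    also have "\<dots> \<le> Qmin\<^sup>2 * (\<psi> (x, w x))\<^sup>2 * 1 / (C * \<epsilon>)"
      using \<open>sqrt (1 + (deriv w x)\<^sup>2) / K \<le> 1\<close> C \<epsilon>
      by (intro divide_right_mono mult_left_mono) auto
    also have "\<dots> \<le> (Q (x, w x) * \<psi> (x, w x))\<^sup>2 / (C * \<epsilon>)"
      using Q x C \<epsilon> by (intro divide_right_mono)
        (auto simp: power_mult_distrib intro!: mult_right_mono power_mono)
    moreover have "0 \<le> c" unfolding c_def using C K \<epsilon> by simp
    ultimately have "ennreal c * ennreal (g x) \<le> ennreal ((Q (x, w x) * \<psi> (x, w x))\<^sup>2 / (C * \<epsilon>))"
      by (simp add: ennreal_mult'[symmetric] ennreal_leI)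
    also have "\<dots> \<le> (\<integral>\<^sup>+y. ennreal (indicator D (x, y) * (py v (x, y))\<^sup>2) \<partial>lborel)"
      unfolding D_def
    proof (rule solves_aux_vertical_energy_ge[OF sol \<sigma> _ x \<epsilon>(1) C])
      show "\<forall>s>0. (\<sigma> = -1 \<longrightarrow> s < w x) \<longrightarrow> (x, w x + \<sigma> * s) \<in> {p\<in>Omega. u p > 0}"
        using side x by blast
      show "s / C \<le> infdist (x, w x + \<sigma> * s) (Gam w)" if "0 \<le> s" for s
      proof -
        have "\<bar>\<sigma>\<bar> = 1" using \<sigma> by auto
        then show ?thesis unfolding C_def by (rule infdist_Gam_vertical_ge[OF lip x' _ that])
      qed
      show "C * \<epsilon> < w x" using m x' \<epsilon>(2) by fastforce
    qed
    finally show ?thesis .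
  qed (simp add: g_def)
  have "ennreal c = ennreal c * (\<integral>\<^sup>+x. ennreal (g x) \<partial>lborel)"
    using L2sq_Gam_eq_1_nn_integral(2)[OF \<psi>(2)] unfolding g_def by simp
  also have "\<dots> = (\<integral>\<^sup>+x. ennreal c * ennreal (g x) \<partial>lborel)"
    using L2sq_Gam_eq_1_nn_integral(1)[OF \<psi>(2)] unfolding g_def by (rule nn_integral_cmult[symmetric])
  also have "\<dots> \<le> (\<integral>\<^sup>+x. \<integral>\<^sup>+y. ennreal (indicator D (x, y) * (py v (x, y))\<^sup>2) \<partial>lborel \<partial>lborel)"
    by (intro nn_integral_mono slice)
  also have "\<dots> \<le> set_nn_integral lebesgue D (\<lambda>p. ennreal (grad_sq v p))"
    by (rule nn_integral_vertical_slices_le_energy[OF D py])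
  finally show "ennreal (Qmin\<^sup>2 / (C * sqrt (1 + B\<^sup>2) * \<epsilon>))
      \<le> set_nn_integral lebesgue (Ueps w \<epsilon> \<inter> {p\<in>Omega. u p > 0}) (\<lambda>p. ennreal (grad_sq (snd (\<psi>, v)) p))"
    unfolding c_def K_def D_def by simp
qed

lemma tendsto_top_at_right_0_if_ge_inverse:
  fixes f :: "real \<Rightarrow> ennreal"
  assumes c: "c > 0" and d: "d > 0" and ge: "\<And>\<epsilon>. 0 < \<epsilon> \<Longrightarrow> \<epsilon> < d \<Longrightarrow> ennreal (c / \<epsilon>) \<le> f \<epsilon>"
  shows "(f \<longlongrightarrow> top) (at_right 0)"
proof -
  have "LIM \<epsilon> at_right 0. c / \<epsilon> :> at_top"
    using filterlim_tendsto_pos_mult_at_top[OF tendsto_const c filterlim_inverse_at_top_right]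
    by (simp add: divide_inverse)
  then have lim: "((\<lambda>\<epsilon>. ennreal (c / \<epsilon>)) \<longlongrightarrow> top) (at_right 0)"
    by (simp add: ennreal_tendsto_top_eq_at_top)
  have below_f: "\<forall>\<^sub>F \<epsilon> in at_right 0. ennreal (c / \<epsilon>) \<le> f \<epsilon>"
    using d ge by (auto simp: eventually_at_right_field)
  show ?thesis
  proof (rule order_tendstoI)
    fix a :: ennreal assume "a < top"
    with order_tendstoD(1)[OF lim] have "\<forall>\<^sub>F \<epsilon> in at_right 0. a < ennreal (c / \<epsilon>)" .
    with below_f show "\<forall>\<^sub>F \<epsilon> in at_right 0. a < f \<epsilon>"
      by eventually_elim (rule order.strict_trans2)
  qed simp
qed

theorem lemma5p2:
  fixes ustar w :: "real \<Rightarrow> real" and u Q :: "pt \<Rightarrow> real" and Qmin Qmax \<alpha> :: real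
  assumes ustar_C1: "ustar C1_differentiable_on UNIV"
    and ustar_per: "\<forall>x. ustar (x + 2) = ustar x"
    and ustar_pos: "\<forall>x. ustar x > 0"
    and w_C3: "C3_real w"
    and w_per: "\<forall>x. w (x + 2) = w x"
    and w_pos: "\<forall>x\<in>{-1..1}. w x > 0"
    and u_adm: "admissible ustar u"
    and Op_open: "open {p\<in>Omega. u p > 0}"
    and Gam_eq: "frontier {p\<in>Omega. u p > 0} \<inter> Omega = Gam w"
    and u_harm: "harmonic_on {p\<in>Omega. u p > 0} u"
    and u_Gam: "\<forall>p\<in>Gam w. u p = 0"
    and u_bottom: "\<forall>p\<in>frontier {p\<in>Omega. u p > 0}. snd p = 0 \<longrightarrow> u p = ustar (fst p)"
    and u_per: "\<forall>y>0. u (-1, y) = u (1, y)"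
    and alpha: "0 < \<alpha>" "\<alpha> < 1"
    and u_reg: "C2alpha_upto \<alpha> {p\<in>Omega. u p > 0} (Gam w) u"
    and Q_lip: "\<exists>L. L-lipschitz_on Omega Q"
    and Q_nonneg: "\<forall>p\<in>Omega. Q p \<ge> 0"
    and Q_bounds: "0 < Qmin" "\<forall>p\<in>Omega. Qmin \<le> Q p \<and> Q p \<le> Qmax"
    and free_bdry: "\<forall>x\<in>{-1<..<1}. (dnu w u x)\<^sup>2 = (Q (x, w x))\<^sup>2"
  shows "((\<lambda>\<epsilon>. mu_eps w u Q \<epsilon>) \<longlongrightarrow> top) (at_right 0)"
proof -
  have w: "continuous_on UNIV w" "\<forall>x\<in>{-1<..<1}. w x > 0"
    using C3_real_continuous_on[OF w_C3] w_pos by auto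
  have "{p\<in>Omega. u p > 0} \<subseteq> Omega" "{p\<in>Omega. u p > 0} \<inter> Gam w = {}"
    using u_Gam by auto
  then obtain \<sigma> :: real where \<sigma>: "\<sigma> = 1 \<or> \<sigma> = -1"
    and side: "\<forall>x\<in>{-1<..<1}. \<forall>s>0. (\<sigma> = -1 \<longrightarrow> s < w x) \<longrightarrow> (x, w x + \<sigma> * s) \<in> {p\<in>Omega. u p > 0}"
    using Gam_side[OF w _ _ Gam_eq] by blast
  obtain B where B: "B > 0" "\<forall>x\<in>{-1..1}. \<bar>deriv w x\<bar> \<le> B" "B-lipschitz_on {-1..1} w"
    using C3_real_bounded_deriv_lipschitz[OF w_C3] by blast
  obtain x0 where x0: "x0 \<in> {-1..1}" "\<forall>x\<in>{-1..1}. w x0 \<le> w x"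
    using continuous_attains_inf[OF compact_Icc _ C3_real_continuous_on[OF w_C3], of "-1" 1]
    by auto
  have Q: "\<forall>x\<in>{-1<..<1}. Qmin \<le> Q (x, w x)"
    using Q_bounds(2) w(2) by (auto simp: Omega_def)
  show ?thesis
  proof (rule tendsto_top_at_right_0_if_ge_inverse)
    show "Qmin\<^sup>2 / (2 * (B + 1) * sqrt (1 + B\<^sup>2)) > 0" and "w x0 / (2 * (B + 1)) > 0"
      using B(1) Q_bounds(1) x0(1) w_pos by (auto intro!: divide_pos_pos mult_pos_pos add_pos_nonneg)
    show "ennreal (Qmin\<^sup>2 / (2 * (B + 1) * sqrt (1 + B\<^sup>2)) / \<epsilon>) \<le> mu_eps w u Q \<epsilon>"
      if "0 < \<epsilon>" "\<epsilon> < w x0 / (2 * (B + 1))" for \<epsilon>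
    proof -
      have "2 * (B + 1) * \<epsilon> < w x0" using that B(1) by (simp add: field_simps)
      with mu_eps_ge_inverse[OF \<sigma> side B(2,3) x0(2) _ Q that(1)] Q_bounds(1)
      show ?thesis by (simp add: divide_divide_eq_left)
    qed
  qed
qed

end
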